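(* Consider the discrete first-price auction in the model without ties with $n\ge3$ bidders whose values are drawn independently and uniformly from $X=\{0,1,\dots,x\}$. If $$x>\frac{2^{1/(n-1)}}{2^{1/(n-1)}-1},$$ then the auction has no symmetric equilibrium.
   Context: Model. There are $n$ risk-neutral bidders competing for one indivisible object. Values and bids lie in $X=\{0,1,2,\dots,x\}$ for some $x\in\mathbb N$. Each bidder privately learns a value drawn independently and uniformly from $X$. Each bidder submits a bid in $X$. A (pure) strategy is a bidding function $\beta:X\to X$. In the model without ties, bidder $i$ wins iff $b_i>b_j$ for all $j\neq i$ (if the highest bid is tied, nobody wins). In the first-price auction, a bidder with value $v_i$ bidding $b_i$ gets expected payoff $(v_i-b_i)\Pr(i\text{ wins})$. An equilibrium is a profile of bidding functions such that each bidder's bidding function maximises their expected payoff given the others' bidding functions (a pure-strategy Bayes–Nash equilibrium) and such that no bidder uses a weakly dominated bidding function (a bidding function is weakly dominated if some other bidding function yields at least as high expected payoff against every profile of opponents' bidding functions, and strictly higher against some). A symmetric equilibrium is an equilibrium in which all bidders use the same bidding function. *)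

theory Defs
  imports Complex_Main
begin

text \<open>Values and bids lie in X = {0..x}. A bidding function is a map nat => nat
  sending X into X (its values outside X are irrelevant).\<close>

definition valid_bf :: "nat \<Rightarrow> (nat \<Rightarrow> nat) \<Rightarrow> bool" where
  "valid_bf x \<beta> \<longleftrightarrow> (\<forall>v\<le>x. \<beta> v \<le> x)"

text \<open>Probability of winning (no ties: win iff strictly highest bid) with bid b
  against opponents using the bidding functions in the list bs, values i.i.d.
  uniform on X.\<close>

definition win_prob :: "nat \<Rightarrow> (nat \<Rightarrow> nat) list \<Rightarrow> nat \<Rightarrow> real" where
  "win_prob x bs b = (\<Prod>\<gamma>\<leftarrow>bs. real (card {w\<in>{0..x}. \<gamma> w < b}) / real (x + 1))"

definition payoff :: "nat \<Rightarrow> (nat \<Rightarrow> nat) list \<Rightarrow> (nat \<Rightarrow> nat) \<Rightarrow> real" where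
  "payoff x bs \<beta> =
     (\<Sum>v\<in>{0..x}. (real v - real (\<beta> v)) * win_prob x bs (\<beta> v)) / real (x + 1)"

definition opp_profile :: "nat \<Rightarrow> nat \<Rightarrow> (nat \<Rightarrow> nat) list \<Rightarrow> bool" where
  "opp_profile n x bs \<longleftrightarrow> length bs = n - 1 \<and> (\<forall>\<gamma>\<in>set bs. valid_bf x \<gamma>)"

definition weakly_dominated :: "nat \<Rightarrow> nat \<Rightarrow> (nat \<Rightarrow> nat) \<Rightarrow> bool" where
  "weakly_dominated n x \<beta> \<longleftrightarrow>
     (\<exists>\<beta>'. valid_bf x \<beta>' \<and>
        (\<forall>bs. opp_profile n x bs \<longrightarrow> payoff x bs \<beta>' \<ge> payoff x bs \<beta>) \<and>
        (\<exists>bs. opp_profile n x bs \<and> payoff x bs \<beta>' > payoff x bs \<beta>))"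

definition sym_equilibrium :: "nat \<Rightarrow> nat \<Rightarrow> (nat \<Rightarrow> nat) \<Rightarrow> bool" where
  "sym_equilibrium n x \<beta> \<longleftrightarrow>
     valid_bf x \<beta> \<and>
     (\<forall>\<beta>'. valid_bf x \<beta>' \<longrightarrow>
        payoff x (replicate (n - 1) \<beta>) \<beta>' \<le> payoff x (replicate (n - 1) \<beta>) \<beta>) \<and>
     \<not> weakly_dominated n x \<beta>"

end

theory Submission
  imports Defs
begin

text \<open>In a symmetric equilibrium nobody bids at or above their value (from value 2 on, bidding
  one less is weakly better), and best responses are monotone. Comparing neighbouring bids then
  pins the bids down inductively: \<open>\<beta> v = v - 1\<close> for \<open>2 \<le> v \<le> x\<close>. Indeed, at the first value
  \<open>v\<close> bidding \<open>v - 2\<close> instead, indifference towards bidding \<open>v - 1\<close> forces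
  \<open>(v + 1)\<^sup>k \<le> 2 (v - 1)\<^sup>k\<close> (with \<open>k = n - 1\<close>), while at value \<open>v - 1\<close> not bidding \<open>v - 3\<close> forces
  \<open>2 (v - 2)\<^sup>k \<le> (v - 1)\<^sup>k\<close>, and these are incompatible. For this bidding function, however, the
  top type \<open>x\<close> gains by bidding \<open>x - 2\<close>: it keeps winning with probability at least
  \<open>((x - 1)/(x + 1))\<^sup>k\<close> instead of at most \<open>(x/(x + 1))\<^sup>k\<close> and doubles its margin, which is
  profitable precisely when \<open>2 (x - 1)\<^sup>k > x\<^sup>k\<close>, i.e. above the threshold.\<close>

definition bid_count :: "nat \<Rightarrow> (nat \<Rightarrow> nat) \<Rightarrow> nat \<Rightarrow> nat" where
  "bid_count x \<beta> b = card {w\<in>{0..x}. \<beta> w < b}"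

lemma win_prob_replicate:
  "win_prob x (replicate k \<beta>) b = (real (bid_count x \<beta> b) / real (x + 1)) ^ k"
  by (simp add: win_prob_def bid_count_def map_replicate prod_list_replicate)

lemma win_prob_nonneg: "0 \<le> win_prob x bs b"
  unfolding win_prob_def by (induction bs) auto

lemma win_prob_against_zero_bids: "1 \<le> b \<Longrightarrow> win_prob x (replicate m (\<lambda>_. 0)) b = 1"
  by (simp add: win_prob_def map_replicate prod_list_replicate)

lemma payoff_fun_upd:
  assumes "v \<le> x"
  shows "payoff x bs (\<beta>(v := b)) = payoff x bs \<beta> +
     ((real v - real b) * win_prob x bs b - (real v - real (\<beta> v)) * win_prob x bs (\<beta> v))
       / real (x + 1)"
proof -
  define f where "f g u = (real u - real (g u)) * win_prob x bs (g u)" for g u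
  have split: "(\<Sum>u\<in>{0..x}. f g u) = f g v + (\<Sum>u\<in>{0..x}-{v}. f g u)" for g
    using assms by (subst sum.remove[of _ v]) auto
  have rest: "(\<Sum>u\<in>{0..x}-{v}. f (\<beta>(v := b)) u) = (\<Sum>u\<in>{0..x}-{v}. f \<beta> u)"
    by (rule sum.cong) (auto simp: f_def)
  have "payoff x bs g = (\<Sum>u\<in>{0..x}. f g u) / real (x + 1)" for g
    unfolding payoff_def f_def by simp
  then show ?thesis
    using split[of "\<beta>(v := b)"] split[of \<beta>] rest
    by (simp add: f_def add_divide_distrib diff_divide_distrib)
qed

lemma opp_profile_zero_bids: "opp_profile n x (replicate (n - 1) (\<lambda>_. 0))"
  by (simp add: opp_profile_def valid_bf_def)

lemma weakly_dominated_by_fun_upd: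
  assumes "valid_bf x \<beta>" "v \<le> x" "b \<le> x"
    and never_worse: "\<And>bs. (real v - real (\<beta> v)) * win_prob x bs (\<beta> v)
                              \<le> (real v - real b) * win_prob x bs b"
    and better: "(real v - real (\<beta> v)) * win_prob x (replicate (n - 1) (\<lambda>_. 0)) (\<beta> v)
                   < (real v - real b) * win_prob x (replicate (n - 1) (\<lambda>_. 0)) b"
  shows "weakly_dominated n x \<beta>"
  unfolding weakly_dominated_def
proof (intro exI conjI allI impI)
  show "valid_bf x (\<beta>(v := b))"
    using assms(1,3) by (auto simp: valid_bf_def)
  show "payoff x bs \<beta> \<le> payoff x bs (\<beta>(v := b))" for bs
    using never_worse[of bs] by (simp add: payoff_fun_upd[OF assms(2)])
  show "opp_profile n x (replicate (n - 1) (\<lambda>_. 0))"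
    by (rule opp_profile_zero_bids)
  show "payoff x (replicate (n - 1) (\<lambda>_. 0)) \<beta> < payoff x (replicate (n - 1) (\<lambda>_. 0)) (\<beta>(v := b))"
    using better by (simp add: payoff_fun_upd[OF assms(2)])
qed

lemma weakly_dominated_if_overbid:
  assumes "valid_bf x \<beta>" "v \<le> x" "v < \<beta> v"
  shows "weakly_dominated n x \<beta>"
proof (rule weakly_dominated_by_fun_upd[OF assms(1,2,2)])
  show "(real v - real (\<beta> v)) * win_prob x bs (\<beta> v) \<le> (real v - real v) * win_prob x bs v" for bs
    using assms(3) win_prob_nonneg[of x bs] by (simp add: mult_nonpos_nonneg)
  show "(real v - real (\<beta> v)) * win_prob x (replicate (n - 1) (\<lambda>_. 0)) (\<beta> v)
      < (real v - real v) * win_prob x (replicate (n - 1) (\<lambda>_. 0)) v"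
    using assms(3) by (simp add: win_prob_against_zero_bids)
qed

lemma weakly_dominated_if_bid_eq_value:
  assumes "valid_bf x \<beta>" "v \<le> x" "\<beta> v = v" "2 \<le> v"
  shows "weakly_dominated n x \<beta>"
proof (rule weakly_dominated_by_fun_upd[OF assms(1,2)])
  show "v - 1 \<le> x" using assms(2) by simp
  show "(real v - real (\<beta> v)) * win_prob x bs (\<beta> v)
      \<le> (real v - real (v - 1)) * win_prob x bs (v - 1)" for bs
    using assms(3,4) win_prob_nonneg[of x bs "v - 1"] by (simp add: of_nat_diff)
  show "(real v - real (\<beta> v)) * win_prob x (replicate (n - 1) (\<lambda>_. 0)) (\<beta> v)
      < (real v - real (v - 1)) * win_prob x (replicate (n - 1) (\<lambda>_. 0)) (v - 1)"
    using assms(3,4) by (simp add: win_prob_against_zero_bids of_nat_diff)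
qed

lemma bid_count_mono: "b \<le> b' \<Longrightarrow> bid_count x \<beta> b \<le> bid_count x \<beta> b'"
  unfolding bid_count_def by (intro card_mono) auto

lemma bid_count_0 [simp]: "bid_count x \<beta> 0 = 0"
  by (simp add: bid_count_def)

lemma bid_count_ge:
  assumes "m \<le> x" "\<And>w. w \<le> m \<Longrightarrow> \<beta> w < b"
  shows "m + 1 \<le> bid_count x \<beta> b"
proof -
  have "card {0..m} \<le> bid_count x \<beta> b"
    unfolding bid_count_def using assms by (intro card_mono) auto
  then show ?thesis by simp
qed

lemma bid_count_le:
  assumes "\<And>w. m \<le> w \<Longrightarrow> w \<le> x \<Longrightarrow> b \<le> \<beta> w"
  shows "bid_count x \<beta> b \<le> m"
proof -
  have "bid_count x \<beta> b \<le> card {0..<m}"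
    unfolding bid_count_def using assms by (intro card_mono) (auto simp: not_le[symmetric])
  then show ?thesis by simp
qed

lemma double_pow_less_pow:
  fixes a c k :: nat
  assumes "2 * a ^ 2 < c ^ 2" "a \<le> c" "2 \<le> k"
  shows "2 * a ^ k < c ^ k"
proof -
  obtain j where k: "k = 2 + j" using assms(3) le_Suc_ex by blast
  have "0 < c" using assms(1) by (cases c) auto
  have "2 * a ^ k = 2 * a ^ 2 * a ^ j" by (metis k power_add mult.assoc)
  also have "\<dots> \<le> 2 * a ^ 2 * c ^ j" by (simp add: power_mono assms(2))
  also have "\<dots> < c ^ 2 * c ^ j" using assms(1) \<open>0 < c\<close> by simp
  also have "\<dots> = c ^ k" by (metis k power_add)
  finally show ?thesis .
qed

lemma mult_le_square_of_pow_ratios: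
  fixes a b c k :: nat
  assumes "2 * a ^ k \<le> b ^ k" "c ^ k \<le> 2 * b ^ k" "0 < k"
  shows "a * c \<le> b * b"
proof -
  have "2 * a ^ k * c ^ k \<le> b ^ k * (2 * b ^ k)"
    using assms(1,2) by (rule mult_mono) simp_all
  then have "(a * c) ^ k \<le> (b * b) ^ k"
    unfolding power_mult_distrib by simp
  then show ?thesis
    using assms(3) by (simp add: power_mono_iff)
qed

lemma pow_less_double_pow_pred_if_above_threshold:
  fixes x k :: nat
  assumes "1 \<le> k" "real x > 2 powr (1 / real k) / (2 powr (1 / real k) - 1)"
  shows "x ^ k < 2 * (x - 1) ^ k"
proof -
  define t where "t = 2 powr (1 / real k)"
  have "1 < t" unfolding t_def using assms(1) by (intro gr_one_powr) auto
  have "t ^ k = 2"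
    unfolding t_def using assms(1) by (simp add: powr_realpow[symmetric] powr_powr)
  have "t / (t - 1) < real x" using assms(2) unfolding t_def .
  moreover have "1 < t / (t - 1)" using \<open>1 < t\<close> by simp
  ultimately have "1 < real x" and "real x < t * (real x - 1)"
    using \<open>1 < t\<close> by (linarith, simp add: field_simps)
  then have "real x ^ k < (t * (real x - 1)) ^ k"
    using assms(1) by (intro power_strict_mono) auto
  then have "real (x ^ k) < real (2 * (x - 1) ^ k)"
    using \<open>t ^ k = 2\<close> \<open>1 < real x\<close> by (simp add: power_mult_distrib of_nat_diff)
  then show ?thesis by (simp only: of_nat_less_iff)
qed

lemma four_le_if_pow_less_double_pow_pred:
  fixes x k :: nat
  assumes "x ^ k < 2 * (x - 1) ^ k" "2 \<le> k"
  shows "4 \<le> x"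
proof (rule ccontr)
  assume "\<not> 4 \<le> x"
  then consider "x \<le> 1" | "x = 2" | "x = 3" by linarith
  then show False
  proof cases
    case 1
    then show False using assms by (simp add: power_0_left)
  next
    case 2
    then show False using assms double_pow_less_pow[of 1 2 k] by simp
  next
    case 3
    then show False using assms double_pow_less_pow[of 2 3 k] by simp
  qed
qed

locale symmetric_equilibrium =
  fixes n x :: nat and \<beta> :: "nat \<Rightarrow> nat"
  assumes equilibrium: "sym_equilibrium n x \<beta>"
begin

lemma valid: "valid_bf x \<beta>"
  using equilibrium by (simp add: sym_equilibrium_def)

lemma undominated: "\<not> weakly_dominated n x \<beta>"
  using equilibrium by (simp add: sym_equilibrium_def)

lemma bid_le_top_value: "v \<le> x \<Longrightarrow> \<beta> v \<le> x"
  using valid by (simp add: valid_bf_def)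

lemma best_response:
  assumes "v \<le> x" "b \<le> x"
  shows "(real v - real b) * real (bid_count x \<beta> b) ^ (n - 1)
       \<le> (real v - real (\<beta> v)) * real (bid_count x \<beta> (\<beta> v)) ^ (n - 1)"
proof -
  have "valid_bf x (\<beta>(v := b))"
    using valid assms(2) by (auto simp: valid_bf_def)
  then have "payoff x (replicate (n - 1) \<beta>) (\<beta>(v := b)) \<le> payoff x (replicate (n - 1) \<beta>) \<beta>"
    using equilibrium by (simp add: sym_equilibrium_def)
  then have "(real v - real b) * win_prob x (replicate (n - 1) \<beta>) b
      \<le> (real v - real (\<beta> v)) * win_prob x (replicate (n - 1) \<beta>) (\<beta> v)"
    by (simp add: payoff_fun_upd[OF assms(1)] divide_le_0_iff)
  then show ?thesis
    by (simp add: win_prob_replicate power_divide divide_le_cancel)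
qed

lemma bid_le_value: "v \<le> x \<Longrightarrow> \<beta> v \<le> v"
  using weakly_dominated_if_overbid[OF valid] undominated by force

lemma bid_less_value: "2 \<le> v \<Longrightarrow> v \<le> x \<Longrightarrow> \<beta> v < v"
  using weakly_dominated_if_bid_eq_value[OF valid] undominated bid_le_value
  by (metis le_neq_implies_less)

lemma bid_0: "\<beta> 0 = 0"
  using bid_le_value[of 0] by simp

lemma best_response_nat:
  assumes "v \<le> x" "b \<le> v"
  shows "(v - b) * bid_count x \<beta> b ^ (n - 1) \<le> (v - \<beta> v) * bid_count x \<beta> (\<beta> v) ^ (n - 1)"
proof -
  have "real ((v - b) * bid_count x \<beta> b ^ (n - 1))
      \<le> real ((v - \<beta> v) * bid_count x \<beta> (\<beta> v) ^ (n - 1))"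
    using best_response[of v b] assms bid_le_value[OF assms(1)] by (simp add: of_nat_diff)
  then show ?thesis by (simp only: of_nat_le_iff)
qed

lemma bid_mono:
  assumes "w \<le> w'" "w' \<le> x"
  shows "\<beta> w \<le> \<beta> w'"
proof (rule ccontr)
  assume "\<not> \<beta> w \<le> \<beta> w'"
  define P where "P = real (bid_count x \<beta> (\<beta> w)) ^ (n - 1)"
  define P' where "P' = real (bid_count x \<beta> (\<beta> w')) ^ (n - 1)"
  have "w < w'" "w \<le> x" "\<beta> w' < \<beta> w"
    using assms \<open>\<not> \<beta> w \<le> \<beta> w'\<close> by (auto simp: le_less)
  have swap_down: "(real w - real (\<beta> w')) * P' \<le> (real w - real (\<beta> w)) * P"
    using best_response[of w "\<beta> w'"] \<open>w \<le> x\<close> bid_le_top_value[OF assms(2)]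
    unfolding P_def P'_def by simp
  have swap_up: "(real w' - real (\<beta> w)) * P \<le> (real w' - real (\<beta> w')) * P'"
    using best_response[of w' "\<beta> w"] assms(2) bid_le_top_value[OF \<open>w \<le> x\<close>]
    unfolding P_def P'_def by simp
  have "P' \<le> P"
    unfolding P_def P'_def using bid_count_mono[of "\<beta> w'" "\<beta> w"] \<open>\<beta> w' < \<beta> w\<close>
    by (intro power_mono) auto
  have "0 < P"
    unfolding P_def using bid_count_ge[of 0 x \<beta> "\<beta> w"] bid_0 \<open>\<beta> w' < \<beta> w\<close> by simp
  \<comment> \<open>Adding both inequalities: the lower bid wins as often as the higher one, yet costs less.\<close>
  have "(real w' - real w) * P \<le> (real w' - real w) * P'"
    using swap_down swap_up by (simp add: algebra_simps)
  then have "P = P'"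
    using \<open>w < w'\<close> \<open>P' \<le> P\<close> by (simp add: mult_le_cancel_left)
  then have "real w - real (\<beta> w') \<le> real w - real (\<beta> w)"
    using swap_down \<open>0 < P\<close> by (simp add: mult_le_cancel_right)
  then show False
    using \<open>\<beta> w' < \<beta> w\<close> by simp
qed

lemma bid_2:
  assumes "2 \<le> n" "2 \<le> x"
  shows "\<beta> 2 = 1"
proof -
  have "\<beta> 2 \<noteq> 0"
  proof
    assume "\<beta> 2 = 0"
    then have "bid_count x \<beta> 1 ^ (n - 1) \<le> 2 * 0 ^ (n - 1)"
      using best_response_nat[of 2 1] assms(2) by simp
    moreover have "1 \<le> bid_count x \<beta> 1"
      using bid_count_ge[of 0 x \<beta> 1] bid_0 by simp
    ultimately show False
      using assms(1) by (simp add: zero_power)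
  qed
  then show ?thesis
    using bid_less_value[of 2] assms(2) by simp
qed

text \<open>If the bids are \<open>w - 1\<close> up to value \<open>u\<close>, the bid \<open>u - 2\<close> still beats all values below
  \<open>u - 1\<close>, so type \<open>u\<close> weighs a doubled margin against winning slightly more often.\<close>

lemma shading_by_one_bound:
  assumes "4 \<le> u" "u \<le> x" and shade: "\<And>w. 2 \<le> w \<Longrightarrow> w \<le> u \<Longrightarrow> \<beta> w = w - 1"
  shows "2 * (u - 1) ^ (n - 1) \<le> u ^ (n - 1)"
proof -
  have "u - 2 + 1 \<le> bid_count x \<beta> (u - 2)"
  proof (rule bid_count_ge)
    show "\<beta> w < u - 2" if "w \<le> u - 2" for w
      using that shade[of w] bid_0 bid_le_value[of 1] assms(1,2)
      by (cases "w \<le> 1") (auto simp: le_Suc_eq)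
  qed (use assms in simp)
  then have lower: "u - 1 \<le> bid_count x \<beta> (u - 2)"
    using assms(1) by simp
  have upper: "bid_count x \<beta> (u - 1) \<le> u"
    using shade[of u] bid_mono[of u] assms(1) by (intro bid_count_le) fastforce
  have "(u - (u - 2)) * bid_count x \<beta> (u - 2) ^ (n - 1)
      \<le> (u - \<beta> u) * bid_count x \<beta> (\<beta> u) ^ (n - 1)"
    using best_response_nat[of u "u - 2"] assms(2) by simp
  then have "2 * bid_count x \<beta> (u - 2) ^ (n - 1) \<le> bid_count x \<beta> (u - 1) ^ (n - 1)"
    using shade[of u] assms(1) by simp
  moreover have "(u - 1) ^ (n - 1) \<le> bid_count x \<beta> (u - 2) ^ (n - 1)"
    using lower by (rule power_mono) simp
  moreover have "bid_count x \<beta> (u - 1) ^ (n - 1) \<le> u ^ (n - 1)"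
    using upper by (rule power_mono) simp
  ultimately show ?thesis
    by linarith
qed

lemma first_deeper_shading_bound:
  assumes "3 \<le> v" "v \<le> x"
    and shade: "\<And>w. 2 \<le> w \<Longrightarrow> w < v \<Longrightarrow> \<beta> w = w - 1" and "\<beta> v \<noteq> v - 1"
  shows "(v + 1) ^ (n - 1) \<le> 2 * (v - 1) ^ (n - 1)"
proof -
  have prev: "\<beta> (v - 1) = v - 2"
    using shade[of "v - 1"] assms(1) by simp
  have bid_v: "\<beta> v = v - 2"
    using bid_mono[of "v - 1" v] bid_less_value[of v] prev assms by simp
  have lower: "v + 1 \<le> bid_count x \<beta> (v - 1)"
  proof (rule bid_count_ge[OF assms(2)])
    show "\<beta> w < v - 1" if "w \<le> v" for w
      using that shade[of w] bid_0 bid_le_value[of 1] bid_v assms(1,2)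
      by (cases "w \<le> 1"; cases "w = v") (auto simp: le_Suc_eq)
  qed
  have upper: "bid_count x \<beta> (v - 2) \<le> v - 1"
    using prev bid_mono[of "v - 1"] by (intro bid_count_le) fastforce
  have "(v - (v - 1)) * bid_count x \<beta> (v - 1) ^ (n - 1)
      \<le> (v - \<beta> v) * bid_count x \<beta> (\<beta> v) ^ (n - 1)"
    using best_response_nat[of v "v - 1"] assms(2) by simp
  then have "bid_count x \<beta> (v - 1) ^ (n - 1) \<le> 2 * bid_count x \<beta> (v - 2) ^ (n - 1)"
    using bid_v assms(1) by simp
  moreover have "(v + 1) ^ (n - 1) \<le> bid_count x \<beta> (v - 1) ^ (n - 1)"
    using lower by (rule power_mono) simp
  moreover have "bid_count x \<beta> (v - 2) ^ (n - 1) \<le> (v - 1) ^ (n - 1)"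
    using upper by (rule power_mono) simp
  ultimately show ?thesis
    by linarith
qed

lemma bid_eq_value_minus_one:
  assumes "3 \<le> n" "2 \<le> v" "v \<le> x"
  shows "\<beta> v = v - 1"
  using assms(2,3)
proof (induction v rule: less_induct)
  case (less v)
  show ?case
  proof (rule ccontr)
    assume deeper: "\<beta> v \<noteq> v - 1"
    then have "3 \<le> v"
      using bid_2 less.prems assms(1) by (cases "v = 2") auto
    have shade: "\<beta> w = w - 1" if "2 \<le> w" "w < v" for w
      using less.IH that less.prems by simp
    have up: "(v + 1) ^ (n - 1) \<le> 2 * (v - 1) ^ (n - 1)"
      using first_deeper_shading_bound[OF \<open>3 \<le> v\<close> less.prems(2) shade deeper] by simp
    show False
    proof (cases "v \<le> 4")
      case True
      then have "v = 3 \<or> v = 4" using \<open>3 \<le> v\<close> by auto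
      then have "2 * (v - 1) ^ (n - 1) < (v + 1) ^ (n - 1)"
        by (elim disjE) (rule double_pow_less_pow; use assms(1) in simp)+
      then show False using up by simp
    next
      case False
      have "2 * (v - 1 - 1) ^ (n - 1) \<le> (v - 1) ^ (n - 1)"
        using False less.prems(2) shade by (intro shading_by_one_bound) auto
      then have "(v - 2) * (v + 1) \<le> (v - 1) * (v - 1)"
        using up assms(1) by (intro mult_le_square_of_pow_ratios) (auto simp: numeral_2_eq_2)
      moreover obtain u where "v = u + 5"
        using le_Suc_ex[of 5 v] False by (auto simp: add.commute)
      ultimately show False
        by (simp add: algebra_simps)
    qed
  qed
qed

end

theorem proposition3:
  fixes n x :: nat
  assumes "n \<ge> 3"
    and "real x > 2 powr (1 / real (n - 1)) / (2 powr (1 / real (n - 1)) - 1)"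
  shows "\<not> (\<exists>\<beta>. sym_equilibrium n x \<beta>)"
proof
  assume "\<exists>\<beta>. sym_equilibrium n x \<beta>"
  then obtain \<beta> where "sym_equilibrium n x \<beta>" by blast
  then interpret symmetric_equilibrium n x \<beta> by unfold_locales
  have "x ^ (n - 1) < 2 * (x - 1) ^ (n - 1)"
    using assms by (intro pow_less_double_pow_pred_if_above_threshold) auto
  moreover have "4 \<le> x"
    using calculation assms(1) by (intro four_le_if_pow_less_double_pow_pred) auto
  moreover have "2 * (x - 1) ^ (n - 1) \<le> x ^ (n - 1)"
    using calculation assms(1) bid_eq_value_minus_one by (intro shading_by_one_bound) auto
  ultimately show False
    by linarith
qed

end
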